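(* The virtual knot invariant $F_K(t,s)$, which takes values in an abelian group, is a (Kauffman) finite-type invariant of degree one. Concretely: <ul> <li>for every virtual knot diagram $K$ with exactly two singular crossings, $$\sum_{\sigma\in\{0,1\}^2}(-1)^{|\sigma|}F_{K_\sigma}(t,s)=0;$$</li> <li>one is the minimal $n$ for which the analogous identity holds for all diagrams with $n+1$ singular crossings.</li> </ul>
   Context: A virtual knot invariant $f$ with values in an abelian group is a finite-type invariant of degree $\le n$ if the following holds. For every oriented virtual knot diagram $K$ with exactly $n+1$ singular crossings (transverse double points, in addition to real and virtual crossings), $$\sum_{\sigma\in\{0,1\}^{n+1}}(-1)^{|\sigma|}f(K_\sigma)=0.$$ Here $|\sigma|$ is the number of ones in $\sigma$, and $K_\sigma$ is obtained by replacing the $i$-th singular crossing with a positive crossing if $\sigma_i=0$ and a negative crossing if $\sigma_i=1$. The degree of $f$ is the minimal such $n$. The Gauss diagram of an oriented virtual knot diagram is built as follows. Take a counterclockwise-oriented circle. For each real crossing, join its two preimages by a chord directed from over- to undercrossing, labeled with the writhe $w(c)=\pm1$. Put $w(K)=\sum_c w(c)$. Let $d$ be a chord intersecting a chord $c$ (endpoints interleave). We say $d$ crosses $c$ from left to right if, viewing $c$ along its direction, the tail of $d$ lies on the left and its head on the right; right to left is the opposite. Let $r_1,\dots,r_n$ be the chords crossing $c$ from left to right and $l_1,\dots,l_m$ those crossing from right to left. Then $\mathrm{Ind}(c)=\sum_i w(r_i)-\sum_j w(l_j)$. Put $N=|\mathrm{Ind}(c)|$ and let $\phi$ be reduction mod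 $N$ into $\{0,\dots,N-1\}$ if $N\ge1$, and the identity if $N=0$. Define $$g_c(s)=\sum_i w(r_i)s^{\phi(\mathrm{Ind}(r_i))}-\sum_j w(l_j)s^{\phi(-\mathrm{Ind}(l_j))}.$$ Call Laurent polynomials $p,q\in\mathbb{Z}[s,s^{-1}]$ equivalent if $p(1)=q(1)$ and $p\equiv q\pmod{s^{|p(1)|}-1}$. Write $t^{[p]}$ for the corresponding basis element of the free abelian group on equivalence classes. Then $$F_K(t,s)=\sum_c w(c)\,t^{[g_c(s)]}-w(K)\,t^{[0]},$$ summing over all real crossings. $F_K(t,s)$ is invariant under generalized Reidemeister moves. *)

theory Defs
  imports Main "HOL-Library.Function_Algebras"
begin

text \<open>Points on the (counterclockwise oriented) circle are natural numbers; their
  counterclockwise cyclic order is the cyclic order induced by the usual order of nat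
  (the circle is cut at an arbitrary base point; nothing below depends on the base point).
  A real chord is a triple (tail, head, writhe): directed from over- to undercrossing.\<close>

type_synonym chord = "nat \<times> nat \<times> int"

definition tl_of :: "chord \<Rightarrow> nat" where "tl_of c = fst c"
definition hd_of :: "chord \<Rightarrow> nat" where "hd_of c = fst (snd c)"
definition wr :: "chord \<Rightarrow> int" where "wr c = snd (snd c)"

definition endpoints :: "chord list \<Rightarrow> nat list" where
  "endpoints R = concat (map (\<lambda>c. [tl_of c, hd_of c]) R)"

definition wf_gauss :: "chord list \<Rightarrow> bool" where
  "wf_gauss R \<longleftrightarrow> distinct (endpoints R) \<and> (\<forall>c\<in>set R. wr c = 1 \<or> wr c = -1)"

definition right_of :: "chord \<Rightarrow> nat \<Rightarrow> bool" where
  "right_of c x = (x \<noteq> tl_of c \<and> x \<noteq> hd_of c \<and>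
     (if tl_of c < hd_of c then tl_of c < x \<and> x < hd_of c
      else x > tl_of c \<or> x < hd_of c))"

definition left_of :: "chord \<Rightarrow> nat \<Rightarrow> bool" where
  "left_of c x = (x \<noteq> tl_of c \<and> x \<noteq> hd_of c \<and>
     (if hd_of c < tl_of c then hd_of c < x \<and> x < tl_of c
      else x > hd_of c \<or> x < tl_of c))"

definition crosses_LR :: "chord \<Rightarrow> chord \<Rightarrow> bool" where
  "crosses_LR c d \<longleftrightarrow> left_of c (tl_of d) \<and> right_of c (hd_of d)"

definition crosses_RL :: "chord \<Rightarrow> chord \<Rightarrow> bool" where
  "crosses_RL c d \<longleftrightarrow> right_of c (tl_of d) \<and> left_of c (hd_of d)"

definition writhe :: "chord list \<Rightarrow> int" where
  "writhe R = sum_list (map wr R)"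

definition Ind :: "chord list \<Rightarrow> chord \<Rightarrow> int" where
  "Ind R c = sum_list (map (\<lambda>d. if crosses_LR c d then wr d else 0) R)
           - sum_list (map (\<lambda>d. if crosses_RL c d then wr d else 0) R)"

definition phi :: "int \<Rightarrow> int \<Rightarrow> int" where
  "phi N x = (if N = 0 then x else x mod N)"

type_synonym lpoly = "int \<Rightarrow> int"

definition is_lpoly :: "lpoly \<Rightarrow> bool" where
  "is_lpoly p \<longleftrightarrow> finite {k. p k \<noteq> 0}"

definition lp_at1 :: "lpoly \<Rightarrow> int" where
  "lp_at1 p = sum p {k. p k \<noteq> 0}"

text \<open>p is congruent to q modulo s^N - 1 in Z[s,s^-1]: p - q = (s^N - 1) h for a Laurent
  polynomial h (the coefficient of s^k in (s^N-1)h is h(k-N) - h(k)).\<close>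
definition lp_cong :: "nat \<Rightarrow> lpoly \<Rightarrow> lpoly \<Rightarrow> bool" where
  "lp_cong N p q \<longleftrightarrow> (\<exists>h. is_lpoly h \<and> (\<forall>k. p k - q k = h (k - int N) - h k))"

definition lp_equiv :: "lpoly \<Rightarrow> lpoly \<Rightarrow> bool" where
  "lp_equiv p q \<longleftrightarrow> lp_at1 p = lp_at1 q \<and> lp_cong (nat \<bar>lp_at1 p\<bar>) p q"

text \<open>The equivalence class [p]; basis elements t^[p] of the free abelian group are
  identified with these classes, and elements of the free abelian group with integer-valued
  functions on classes (finitely supported).\<close>
definition lp_class :: "lpoly \<Rightarrow> lpoly set" where
  "lp_class p = {q. is_lpoly q \<and> lp_equiv p q}"

definition g_poly :: "chord list \<Rightarrow> chord \<Rightarrow> lpoly" where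
  "g_poly R c = (let N = \<bar>Ind R c\<bar> in (\<lambda>k.
      sum_list (map (\<lambda>d. if crosses_LR c d \<and> phi N (Ind R d) = k then wr d else 0) R)
    - sum_list (map (\<lambda>d. if crosses_RL c d \<and> phi N (- Ind R d) = k then wr d else 0) R)))"

definition F_inv :: "chord list \<Rightarrow> (lpoly set \<Rightarrow> int)" where
  "F_inv R = (\<lambda>C. sum_list (map (\<lambda>c. if lp_class (g_poly R c) = C then wr c else 0) R)
                 - (if lp_class (\<lambda>_. 0) = C then writhe R else 0))"

text \<open>A singular chord (a,b): its positive resolution is the real chord (a,b,+1), its negative
  resolution is the reversed chord (b,a,-1) (switching the sign of a crossing swaps over and
  under).\<close>
definition sing_endpoints :: "(nat \<times> nat) list \<Rightarrow> nat list" where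
  "sing_endpoints S = concat (map (\<lambda>(a,b). [a,b]) S)"

definition wf_sing :: "chord list \<Rightarrow> (nat \<times> nat) list \<Rightarrow> bool" where
  "wf_sing R S \<longleftrightarrow> distinct (endpoints R @ sing_endpoints S) \<and> (\<forall>c\<in>set R. wr c = 1 \<or> wr c = -1)"

text \<open>Resolution K_sigma, with sigma encoded by the set I of indices i with sigma_i = 1.\<close>
definition resolve :: "chord list \<Rightarrow> (nat \<times> nat) list \<Rightarrow> nat set \<Rightarrow> chord list" where
  "resolve R S I = R @ map (\<lambda>i. if i \<in> I then (snd (S ! i), fst (S ! i), -1)
                               else (fst (S ! i), snd (S ! i), 1)) [0..<length S]"

definition ft_deg_le :: "nat \<Rightarrow> (chord list \<Rightarrow> 'b::ab_group_add) \<Rightarrow> bool" where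
  "ft_deg_le n f \<longleftrightarrow> (\<forall>R S. wf_sing R S \<and> length S = n + 1 \<longrightarrow>
      (\<Sum>I\<in>Pow {..<n+1}. (if even (card I) then f (resolve R S I) else - f (resolve R S I))) = 0)"

definition ft_degree :: "(chord list \<Rightarrow> 'b::ab_group_add) \<Rightarrow> nat" where
  "ft_degree f = (LEAST n. ft_deg_le n f)"

end

theory Submission
  imports Defs
begin

text \<open>Changing the sign of a crossing replaces its chord c by the reversed chord with opposite
  writhe. This leaves the contribution of c to the index of every other chord unchanged and
  negates the index of c itself, so every polynomial g_d with d \<noteq> c is unchanged (the sign
  changes of w(c) and of Ind(c) cancel in g_d). Hence F_K is a sum of terms each depending on
  the resolution of at most one crossing, and every second difference of F vanishes. For degree
  zero it fails: resolving a singular chord that crosses one real chord changes the coefficient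
  of t^[0] from -2 to 0.\<close>

definition flip :: "chord \<Rightarrow> chord" where
  "flip c = (hd_of c, tl_of c, - wr c)"

lemma flip_simps [simp]:
  "tl_of (flip c) = hd_of c" "hd_of (flip c) = tl_of c" "wr (flip c) = - wr c"
  by (simp_all add: flip_def tl_of_def hd_of_def wr_def)

lemma crosses_flip [simp]:
  "crosses_LR (flip c) d = crosses_RL c d" "crosses_RL (flip c) d = crosses_LR c d"
  "crosses_LR c (flip d) = crosses_RL c d" "crosses_RL c (flip d) = crosses_LR c d"
  by (auto simp: crosses_LR_def crosses_RL_def left_of_def right_of_def)

definition flip_rel :: "chord \<Rightarrow> chord \<Rightarrow> bool" where
  "flip_rel d d' \<longleftrightarrow> d' = d \<or> d' = flip d"

abbreviation flip_equiv :: "chord list \<Rightarrow> chord list \<Rightarrow> bool" where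
  "flip_equiv \<equiv> list_all2 flip_rel"

lemma flip_rel_refl [simp]: "flip_rel d d"
  by (simp add: flip_rel_def)

lemma flip_equiv_refl: "flip_equiv L L"
  by (simp add: list_all2_refl)

lemma sum_list_map_list_all2:
  assumes "list_all2 P xs ys" and "\<And>x y. P x y \<Longrightarrow> f x = f y"
  shows "sum_list (map f xs) = sum_list (map f ys)"
  using assms(1) by (induction rule: list_all2_induct) (auto simp: assms(2))

definition Ind_term :: "chord \<Rightarrow> chord \<Rightarrow> int" where
  "Ind_term c d = (if crosses_LR c d then wr d else 0) - (if crosses_RL c d then wr d else 0)"

lemma Ind_eq_sum_list: "Ind L c = (\<Sum>d\<leftarrow>L. Ind_term c d)"
  by (simp add: Ind_def Ind_term_def sum_list_subtractf)

lemma Ind_flip: "Ind L (flip c) = - Ind L c"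
  by (simp add: Ind_eq_sum_list Ind_term_def uminus_sum_list_map o_def)

lemma Ind_flip_equiv: "flip_equiv L L' \<Longrightarrow> Ind L c = Ind L' c"
  unfolding Ind_eq_sum_list
  by (erule sum_list_map_list_all2) (auto simp: flip_rel_def Ind_term_def)

definition g_term :: "int \<Rightarrow> (chord \<Rightarrow> int) \<Rightarrow> chord \<Rightarrow> int \<Rightarrow> chord \<Rightarrow> int" where
  "g_term N J c k d = (if crosses_LR c d \<and> phi N (J d) = k then wr d else 0)
                    - (if crosses_RL c d \<and> phi N (- J d) = k then wr d else 0)"

lemma g_poly_eq_sum_list: "g_poly L c = (\<lambda>k. \<Sum>d\<leftarrow>L. g_term \<bar>Ind L c\<bar> (Ind L) c k d)"
  by (simp add: g_poly_def g_term_def sum_list_subtractf Let_def)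

lemma g_term_flip:
  assumes "\<And>d. J (flip d) = - J d"
  shows "g_term N J c k (flip d) = g_term N J c k d"
  by (simp add: g_term_def assms)

lemma g_poly_flip_equiv:
  assumes "flip_equiv L L'"
  shows "g_poly L c = g_poly L' c"
proof -
  have "Ind L' = Ind L"
    using Ind_flip_equiv[OF assms] by auto
  moreover have "(\<Sum>d\<leftarrow>L. g_term N (Ind L) c k d) = (\<Sum>d\<leftarrow>L'. g_term N (Ind L) c k d)" for N k
    using assms
    by (rule sum_list_map_list_all2) (auto simp: flip_rel_def g_term_flip Ind_flip)
  ultimately show ?thesis
    by (simp add: g_poly_eq_sum_list)
qed

definition F_term :: "lpoly set \<Rightarrow> chord list \<Rightarrow> chord \<Rightarrow> int" where
  "F_term C L c = (if lp_class (g_poly L c) = C then wr c else 0)"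

lemma F_term_flip_equiv: "flip_equiv L L' \<Longrightarrow> F_term C L c = F_term C L' c"
  by (simp add: F_term_def g_poly_flip_equiv)

lemma F_inv_append2:
  "F_inv (R @ [a, b]) C =
     (\<Sum>c\<leftarrow>R. F_term C (R @ [a, b]) c) + F_term C (R @ [a, b]) a + F_term C (R @ [a, b]) b
     - (if lp_class (\<lambda>_. 0) = C then writhe R + wr a + wr b else 0)"
  by (simp add: F_inv_def F_term_def[abs_def] writhe_def)

lemma F_inv_second_difference:
  assumes a: "flip_rel a a'" and b: "flip_rel b b'"
  shows "F_inv (R @ [a, b]) - F_inv (R @ [a', b]) - F_inv (R @ [a, b']) + F_inv (R @ [a', b']) = 0"
proof
  fix C
  have "F_term C (R @ [x, y]) c = F_term C (R @ [a, b]) c"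
    if "flip_rel a x" "flip_rel b y" for x y c
    using that by (intro F_term_flip_equiv[symmetric]) (simp add: flip_equiv_refl list_all2_appendI)
  then have "F_term C (R @ [a', b]) c = F_term C (R @ [a, b]) c"
    and "F_term C (R @ [a, b']) c = F_term C (R @ [a, b]) c"
    and "F_term C (R @ [a', b']) c = F_term C (R @ [a, b]) c" for c
    using a b flip_rel_refl by blast+
  then show "(F_inv (R @ [a, b]) - F_inv (R @ [a', b]) - F_inv (R @ [a, b']) + F_inv (R @ [a', b'])) C
      = 0 C"
    by (simp add: F_inv_append2)
qed

definition sing_resolution :: "nat \<times> nat \<Rightarrow> bool \<Rightarrow> chord" where
  "sing_resolution s neg = (if neg then flip (fst s, snd s, 1) else (fst s, snd s, 1))"

lemma flip_rel_sing_resolution: "flip_rel (sing_resolution s False) (sing_resolution s neg)"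
  by (simp add: flip_rel_def sing_resolution_def)

lemma resolve_two:
  "resolve R [s0, s1] I = R @ [sing_resolution s0 (0 \<in> I), sing_resolution s1 (1 \<in> I)]"
  by (simp add: resolve_def sing_resolution_def flip_def tl_of_def hd_of_def wr_def upt_rec)

lemma Pow_lessThan_2: "Pow {..<2::nat} = {{}, {0}, {1}, {0, 1}}"
proof -
  have "{..<2::nat} = {0, 1}" by auto
  then show ?thesis by (auto simp: Pow_insert)
qed

lemma ft_deg_le_1_F_inv: "ft_deg_le 1 F_inv"
  unfolding ft_deg_le_def
proof (intro allI impI)
  fix R :: "chord list" and S :: "(nat \<times> nat) list"
  assume "wf_sing R S \<and> length S = 1 + 1"
  then obtain s0 s1 where S: "S = [s0, s1]"
    by (metis One_nat_def Suc_1 length_0_conv length_Suc_conv one_add_one)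
  let ?r0 = "sing_resolution s0" and ?r1 = "sing_resolution s1"
  have "(\<Sum>I\<in>Pow {..<1+1}. if even (card I) then F_inv (resolve R S I) else - F_inv (resolve R S I))
      = F_inv (R @ [?r0 False, ?r1 False]) - F_inv (R @ [?r0 True, ?r1 False])
        - F_inv (R @ [?r0 False, ?r1 True]) + F_inv (R @ [?r0 True, ?r1 True])"
    unfolding one_add_one Pow_lessThan_2 by (simp add: S resolve_two algebra_simps)
  also have "\<dots> = 0"
    by (intro F_inv_second_difference flip_rel_sing_resolution)
  finally show "(\<Sum>I\<in>Pow {..<1+1}. if even (card I) then F_inv (resolve R S I)
      else - F_inv (resolve R S I)) = 0" .
qed

lemma lp_at1_eq_0_if_class_zero:
  assumes "lp_class p = lp_class (\<lambda>_. 0)"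
  shows "lp_at1 p = 0"
proof -
  have "lp_equiv (\<lambda>_. 0) (\<lambda>_. 0)"
    unfolding lp_equiv_def lp_cong_def is_lpoly_def by (auto intro: exI[of _ "\<lambda>_. 0"])
  then have "(\<lambda>_. 0) \<in> lp_class p"
    unfolding assms by (simp add: lp_class_def is_lpoly_def)
  then show ?thesis
    by (simp add: lp_class_def lp_equiv_def lp_at1_def)
qed

lemma lp_at1_const: "lp_at1 (\<lambda>k. if k = 0 then c else 0) = c"
proof (cases "c = 0")
  case False
  then have "{k. (if k = 0 then c else 0) \<noteq> 0} = {0}" by auto
  then show ?thesis by (simp add: lp_at1_def)
qed (simp add: lp_at1_def)

lemma not_ft_deg_le_0_F_inv: "\<not> ft_deg_le 0 F_inv"
proof
  assume deg0: "ft_deg_le 0 F_inv"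
  define R where "R = [(0::nat, 2::nat, 1::int)]"
  define S where "S = [(1::nat, 3::nat)]"
  have "wf_sing R S" "length S = 0 + 1"
    by (simp_all add: R_def S_def wf_sing_def endpoints_def sing_endpoints_def tl_of_def hd_of_def
        wr_def)
  moreover have "Pow {..<0 + 1} = {{}, {0::nat}}"
    by (auto simp: Pow_insert lessThan_Suc)
  ultimately have diff: "F_inv (resolve R S {}) = F_inv (resolve R S {0})"
    using deg0 by (simp add: ft_deg_le_def)
  define C where "C = lp_class (\<lambda>_. 0)"
  have classes: "lp_class (\<lambda>k. if k = 0 then c else 0) \<noteq> C" if "c \<noteq> 0" for c
    using that lp_at1_eq_0_if_class_zero lp_at1_const unfolding C_def by metis
  have "resolve R S {} = [(0,2,1),(1,3,1)]" "resolve R S {0} = [(0,2,1),(3,1,-1)]"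
    by (simp_all add: resolve_def R_def S_def)
  moreover have "g_poly [(0,2,1),(1,3,1)] (0,2,1) = (\<lambda>k. if k = 0 then -1 else 0)"
    and "g_poly [(0,2,1),(1,3,1)] (1,3,1) = (\<lambda>k. if k = 0 then 1 else 0)"
    and "g_poly [(0,2,1),(3,1,-1)] (0,2,1) = (\<lambda>k. if k = 0 then -1 else 0)"
    and "g_poly [(0,2,1),(3,1,-1)] (3,1,-1) = (\<lambda>k. if k = 0 then -1 else 0)"
    by (auto simp: fun_eq_iff g_poly_def Ind_def crosses_LR_def crosses_RL_def left_of_def
        right_of_def tl_of_def hd_of_def wr_def phi_def)
  ultimately have "F_inv (resolve R S {}) C = -2" "F_inv (resolve R S {0}) C = 0"
    using classes[of 1] classes[of "-1"] by (simp_all add: F_inv_def C_def writhe_def wr_def)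
  with diff show False by simp
qed

theorem proposition5p5:
  shows "ft_deg_le 1 F_inv \<and> ft_degree F_inv = 1"
proof
  show "ft_deg_le 1 F_inv"
    by (rule ft_deg_le_1_F_inv)
  then show "ft_degree F_inv = 1"
    unfolding ft_degree_def
    by (rule Least_equality) (metis not_ft_deg_le_0_F_inv less_one not_le)
qed

end
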